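(* Let $h$ be the state on $U_n^{nc}$ defined below. Let $1\le i_1,j_1,\dots,i_r,j_r\le n$ and $\epsilon_1,\dots,\epsilon_r\in\{\emptyset,*\}$. If $\#\{m:\epsilon_m=*\}\ne\#\{m:\epsilon_m=\emptyset\}$, then $h(u^{\epsilon_1}_{i_1j_1}\cdots u^{\epsilon_r}_{i_rj_r})=0$. If $\#\{m:\epsilon_m=*\}=\#\{m:\epsilon_m=\emptyset\}$, then $$h(u^{\epsilon_1}_{i_1j_1}\cdots u^{\epsilon_r}_{i_rj_r})=\prod_{k=-r}^{r}h\Big(\prod^{\rightarrow}_{l\in S_k}u^{\epsilon_l}_{i_lj_l}\Big),$$ where $S_k=\{l\in\{1,\dots,r\}:k=\#\{m>l:\epsilon_m=\emptyset\}-\#\{m\ge l:\epsilon_m=*\}\}$, $\prod^{\rightarrow}$ denotes the product in increasing order of $l$, and an empty product equals $1$ (so $h$ of it is $1$).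
   Context: $U_n^{nc}$ is the universal unital $*$-algebra generated by $u_{ij}$ ($1\le i,j\le n$) with $\sum_ku_{ki}^*u_{kj}=\delta_{ij}=\sum_ku_{ik}u_{jk}^*$; $u^{\emptyset}_{ij}=u_{ij}$. Let $H=\ell^2(\mathbb Z)\otimes\bigotimes_{k\in\mathbb Z}M_n(\mathbb C)$, where $M_n(\mathbb C)$ is a Hilbert space with inner product $\langle A,B\rangle=\mathrm{Tr}(A^*B)/n$ and the infinite tensor product is taken with respect to the reference vector $I_n$; $(\delta_k)$ is the standard basis of $\ell^2(\mathbb Z)$ and $E_{ij}$ the matrix units. Define $U_{ij}(\delta_k\otimes(\cdots\otimes M_{k-1}\otimes M_k\otimes M_{k+1}\otimes\cdots))=\delta_{k+1}\otimes(\cdots\otimes M_{k-1}\otimes E_{ji}M_k\otimes M_{k+1}\otimes\cdots)$, with adjoint $U_{ij}^*(\delta_k\otimes(\cdots\otimes M_{k-1}\otimes\cdots))=\delta_{k-1}\otimes(\cdots\otimes E_{ij}M_{k-1}\otimes M_k\otimes\cdots)$. Let $j:U_n^{nc}\to B(H)$ be the unital $*$-homomorphism with $j(u_{ij})=U_{ij}$, $\Omega=\delta_0\otimes\bigotimes_kI_n$, and $h(a)=\langle\Omega,j(a)\Omega\rangle$. *)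

theory Defs
  imports Complex_Main "Jordan_Normal_Form.Matrix"
begin

text \<open>Matrix unit E_{ij} in M_n(C), indices 1..n (stored 0-based inside mat).\<close>
definition munit :: "nat \<Rightarrow> nat \<Rightarrow> nat \<Rightarrow> complex mat" where
  "munit n i j = mat n n (\<lambda>(a,b). if a = i - 1 \<and> b = j - 1 then 1 else 0)"

definition minner :: "nat \<Rightarrow> complex mat \<Rightarrow> complex mat \<Rightarrow> complex" where
  "minner n A B = (\<Sum>a<n. \<Sum>b<n. cnj (A $$ (a,b)) * B $$ (a,b)) / of_nat n"

text \<open>Elementary tensors delta_k (x) (x)_m M_m of H, with M_m = I_n for all but
  finitely many m (infinite tensor product w.r.t. the reference vector I_n).\<close>
type_synonym etensor = "int \<times> (int \<Rightarrow> complex mat)"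

definition Omega :: "nat \<Rightarrow> etensor" where
  "Omega n = (0, \<lambda>_. 1\<^sub>m n)"

text \<open>Inner product of two elementary tensors (product over the finitely many
  sites where a factor differs from I_n; the others contribute <I_n,I_n> = 1).\<close>
definition einner :: "nat \<Rightarrow> etensor \<Rightarrow> etensor \<Rightarrow> complex" where
  "einner n x y = (if fst x = fst y then
      (\<Prod>m\<in>{m. snd x m \<noteq> 1\<^sub>m n \<or> snd y m \<noteq> 1\<^sub>m n}. minner n (snd x m) (snd y m))
    else 0)"

text \<open>Action of U_{ij} (eps = False) and U_{ij}^* (eps = True) on elementary tensors.\<close>
fun gen_act :: "nat \<Rightarrow> bool \<times> nat \<times> nat \<Rightarrow> etensor \<Rightarrow> etensor" where
  "gen_act n (False, i, j) (k, M) = (k + 1, M(k := munit n j i * M k))"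
| "gen_act n (True, i, j) (k, M) = (k - 1, M(k - 1 := munit n i j * M (k - 1)))"

text \<open>A word [(eps_1,i_1,j_1),...,(eps_r,i_r,j_r)] stands for the monomial
  u^{eps_1}_{i_1 j_1} ... u^{eps_r}_{i_r j_r}; j of it acts by composition
  (rightmost factor first).\<close>
fun word_act :: "nat \<Rightarrow> (bool \<times> nat \<times> nat) list \<Rightarrow> etensor \<Rightarrow> etensor" where
  "word_act n [] x = x"
| "word_act n (g # w) x = gen_act n g (word_act n w x)"

text \<open>The state h(a) = <Omega, j(a) Omega> evaluated on a monomial.\<close>
definition h_word :: "nat \<Rightarrow> (bool \<times> nat \<times> nat) list \<Rightarrow> complex" where
  "h_word n w = einner n (Omega n) (word_act n w (Omega n))"

definition Sk_word :: "(bool \<times> nat \<times> nat) list \<Rightarrow> int \<Rightarrow> (bool \<times> nat \<times> nat) list" where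
  "Sk_word w k = map (\<lambda>l. w ! (l - 1))
     (filter (\<lambda>l. k = int (card {m. l < m \<and> m \<le> length w \<and> \<not> fst (w ! (m - 1))})
                    - int (card {m. l \<le> m \<and> m \<le> length w \<and> fst (w ! (m - 1))}))
        [1..<length w + 1])"

end

theory Submission
  imports Defs
begin

text \<open>A letter of the word moves the \<open>\<ell>2(\<int>)\<close> index by one step and multiplies the
  matrix at a single site by a matrix unit. Acting from the right, the letter at position l
  hits the site k with l in S_k. Applied to \<open>\<Omega>\<close>, the word therefore moves the index to
  \<open>#\<emptyset> - #*\<close> and leaves at each site k the ordered product of the matrices of the letters
  in S_k. The vacuum expectation vanishes unless the index returns to 0, and then it is the
  product over all sites of \<open>\<langle>I_n, \<cdot>\<rangle>\<close>. Each subword S_k is itself balanced and all its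
  letters act on one common site, so its own vacuum expectation is exactly its factor.\<close>

definition shift :: "(bool \<times> nat \<times> nat) list \<Rightarrow> int" where
  "shift w = int (length (filter (\<lambda>g. \<not> fst g) w)) - int (length (filter fst w))"

lemma shift_Nil [simp]: "shift [] = 0"
  by (simp add: shift_def)

lemma shift_Cons [simp]: "shift (g # w) = shift w + (if fst g then -1 else 1)"
  by (simp add: shift_def)

lemma abs_shift_le_length: "\<bar>shift w\<bar> \<le> int (length w)"
  using length_filter_le[of fst w] length_filter_le[of "\<lambda>g. \<not> fst g" w]
  unfolding shift_def by linarith

text \<open>Entry l of \<open>word_sites w\<close> is the site on which the letter \<open>w ! l\<close> acts.\<close>
fun word_sites :: "(bool \<times> nat \<times> nat) list \<Rightarrow> int list" where
  "word_sites [] = []"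
| "word_sites (g # w) = (shift w - (if fst g then 1 else 0)) # word_sites w"

lemma length_word_sites [simp]: "length (word_sites w) = length w"
  by (induction w) auto

lemma word_sites_subset: "set (word_sites w) \<subseteq> {- int (length w)..int (length w)}"
proof (induction w)
  case (Cons g w)
  then show ?case using abs_shift_le_length[of w] by auto
qed simp

lemma nth_word_sites:
  "j < length w \<Longrightarrow> word_sites w ! j =
     int (length (filter (\<lambda>g. \<not> fst g) (drop (Suc j) w))) - int (length (filter fst (drop j w)))"
proof (induction w arbitrary: j)
  case (Cons g w)
  then show ?case by (cases j) (auto simp: shift_def)
qed simp

definition site_subword :: "(bool \<times> nat \<times> nat) list \<Rightarrow> int \<Rightarrow> (bool \<times> nat \<times> nat) list" where
  "site_subword w k = map ((!) w) (filter (\<lambda>j. word_sites w ! j = k) [0..<length w])"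

lemma site_subword_Nil [simp]: "site_subword [] k = []"
  by (simp add: site_subword_def)

lemma site_subword_Cons:
  "site_subword (g # w) k =
     (if shift w - (if fst g then 1 else 0) = k then g # site_subword w k else site_subword w k)"
proof -
  have "[0..<length (g # w)] = 0 # map Suc [0..<length w]"
    by (simp add: upt_conv_Cons map_Suc_upt del: upt_Suc)
  then show ?thesis
    by (simp add: site_subword_def filter_map o_def)
qed

lemma site_subword_eq_Nil: "k \<notin> set (word_sites w) \<Longrightarrow> site_subword w k = []"
  by (auto simp: site_subword_def filter_empty_conv)

lemma shift_site_subword:
  "shift (site_subword w k) = (if shift w > k then 1 else 0) - (if k < 0 then 1 else 0)"
  by (induction w) (auto simp: site_subword_Cons)

lemma word_sites_site_subword:
  "s \<in> set (word_sites (site_subword w k)) \<Longrightarrow> s = (if k < 0 then -1 else 0)"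
  by (induction w) (auto simp: site_subword_Cons shift_site_subword split: if_splits)

lemma site_subword_site_subword:
  "site_subword (site_subword w k) (if k < 0 then -1 else 0) = site_subword w k"
proof -
  let ?v = "site_subword w k"
  have "filter (\<lambda>j. word_sites ?v ! j = (if k < 0 then -1 else 0)) [0..<length ?v] = [0..<length ?v]"
    using word_sites_site_subword[of _ w k] by (auto intro!: filter_True simp: nth_mem)
  then show ?thesis
    by (simp add: site_subword_def[of ?v] map_nth)
qed

lemma card_filter_drop:
  "card {m. a < m \<and> m \<le> length w \<and> P (w ! (m - 1))} = length (filter P (drop a w))"
proof -
  have "{m. a < m \<and> m \<le> length w \<and> P (w ! (m - 1))} =
        (\<lambda>i. i + a + 1) ` {i. i < length (drop a w) \<and> P (drop a w ! i)}"
  proof (rule Set.set_eqI, rule iffI)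
    fix m
    assume "m \<in> {m. a < m \<and> m \<le> length w \<and> P (w ! (m - 1))}"
    then show "m \<in> (\<lambda>i. i + a + 1) ` {i. i < length (drop a w) \<and> P (drop a w ! i)}"
      by (intro image_eqI[of _ _ "m - a - 1"]) auto
  qed (auto simp: add.commute)
  then show ?thesis
    by (simp add: length_filter_conv_card card_image inj_on_def)
qed

lemma Sk_word_eq_site_subword: "Sk_word w k = site_subword w k"
proof -
  have sites: "int (card {m. Suc j < m \<and> m \<le> length w \<and> \<not> fst (w ! (m - 1))})
                 - int (card {m. Suc j \<le> m \<and> m \<le> length w \<and> fst (w ! (m - 1))})
               = word_sites w ! j" if "j < length w" for j
    using that card_filter_drop[of "Suc j" w "\<lambda>g. \<not> fst g"] card_filter_drop[of j w fst]
    by (simp add: nth_word_sites Suc_le_eq)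
  have "[1..<length w + 1] = map Suc [0..<length w]"
    by (simp add: map_Suc_upt)
  then show ?thesis
    unfolding Sk_word_def site_subword_def
    by (auto simp: filter_map o_def sites[symmetric] intro!: arg_cong[where f = "map ((!) w)"] filter_cong)
qed

definition letter_mat :: "nat \<Rightarrow> bool \<times> nat \<times> nat \<Rightarrow> complex mat" where
  "letter_mat n g = (case g of (False, i, j) \<Rightarrow> munit n j i | (True, i, j) \<Rightarrow> munit n i j)"

fun word_mat :: "nat \<Rightarrow> (bool \<times> nat \<times> nat) list \<Rightarrow> complex mat" where
  "word_mat n [] = 1\<^sub>m n"
| "word_mat n (g # w) = letter_mat n g * word_mat n w"

lemma word_act_Omega:
  "word_act n w (Omega n) = (shift w, \<lambda>k. word_mat n (site_subword w k))"
proof (induction w)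
  case Nil
  then show ?case by (simp add: Omega_def site_subword_def)
next
  case (Cons g w)
  obtain b i j where "g = (b, i, j)" by (cases g)
  with Cons show ?case
    by (cases b) (auto simp: site_subword_Cons letter_mat_def fun_eq_iff)
qed

lemma minner_one_one: "n \<ge> 1 \<Longrightarrow> minner n (1\<^sub>m n) (1\<^sub>m n) = 1"
proof -
  assume "n \<ge> 1"
  have "(\<Sum>a<n. \<Sum>b<n. cnj (1\<^sub>m n $$ (a, b)) * 1\<^sub>m n $$ (a, b)) =
        (\<Sum>a<n. \<Sum>b<n. if a = b then 1 else 0 :: complex)"
    by (intro sum.cong) auto
  with \<open>n \<ge> 1\<close> show ?thesis
    by (simp add: minner_def del: index_one_mat)
qed

lemma einner_Omega:
  assumes "n \<ge> 1" "finite S" "\<And>k. k \<notin> S \<Longrightarrow> M k = 1\<^sub>m n"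
  shows "einner n (Omega n) (0, M) = (\<Prod>k\<in>S. minner n (1\<^sub>m n) (M k))"
proof -
  have "einner n (Omega n) (0, M) = (\<Prod>k\<in>{k. M k \<noteq> 1\<^sub>m n}. minner n (1\<^sub>m n) (M k))"
    by (simp add: einner_def Omega_def)
  also have "\<dots> = (\<Prod>k\<in>S. minner n (1\<^sub>m n) (M k))"
    by (rule prod.mono_neutral_left) (use assms minner_one_one in auto)
  finally show ?thesis .
qed

lemma h_word_eq_prod_sites:
  assumes "n \<ge> 1" "finite S" "set (word_sites w) \<subseteq> S"
  shows "h_word n w =
    (if shift w = 0 then \<Prod>k\<in>S. minner n (1\<^sub>m n) (word_mat n (site_subword w k)) else 0)"
proof (cases "shift w = 0")
  case True
  have "site_subword w k = []" if "k \<notin> S" for k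
    using that assms(3) by (intro site_subword_eq_Nil) blast
  moreover have "h_word n w = einner n (Omega n) (0, \<lambda>k. word_mat n (site_subword w k))"
    by (simp add: h_word_def word_act_Omega True)
  ultimately show ?thesis
    using True assms by (simp add: einner_Omega)
next
  case False
  then show ?thesis
    unfolding h_word_def word_act_Omega by (simp add: Omega_def einner_def)
qed

lemma h_word_site_subword:
  assumes "n \<ge> 1" "shift w = 0"
  shows "h_word n (site_subword w k) = minner n (1\<^sub>m n) (word_mat n (site_subword w k))"
proof -
  let ?c = "if k < (0::int) then -1 else 0 :: int"
  have "set (word_sites (site_subword w k)) \<subseteq> {?c}"
    using word_sites_site_subword by blast
  moreover have "shift (site_subword w k) = 0"
    using assms(2) by (simp add: shift_site_subword)
  ultimately show ?thesis
    using h_word_eq_prod_sites[OF assms(1), of "{?c}" "site_subword w k"]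
    by (simp add: site_subword_site_subword)
qed

theorem mainTheorem9:
  fixes n :: nat and w :: "(bool \<times> nat \<times> nat) list"
  assumes "n \<ge> 1"
    and "\<forall>g\<in>set w. fst (snd g) \<in> {1..n} \<and> snd (snd g) \<in> {1..n}"
  shows "(length (filter fst w) \<noteq> length (filter (\<lambda>g. \<not> fst g) w) \<longrightarrow> h_word n w = 0)
       \<and> (length (filter fst w) = length (filter (\<lambda>g. \<not> fst g) w) \<longrightarrow>
            h_word n w = (\<Prod>k\<in>{- int (length w)..int (length w)}. h_word n (Sk_word w k)))"
proof -
  let ?S = "{- int (length w)..int (length w)}"
  have h: "h_word n w =
    (if shift w = 0 then \<Prod>k\<in>?S. minner n (1\<^sub>m n) (word_mat n (site_subword w k)) else 0)"
    using h_word_eq_prod_sites[OF assms(1) _ word_sites_subset] by simp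
  have "shift w = 0 \<longleftrightarrow> length (filter fst w) = length (filter (\<lambda>g. \<not> fst g) w)"
    by (auto simp: shift_def)
  with h show ?thesis
    by (simp add: Sk_word_eq_site_subword h_word_site_subword[OF assms(1)])
qed

end
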